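(* Let $G$ be a finite group. The graph $\mathcal{P}^*(G)/\mathtt{T}$ is a tame quotient of $\mathcal{P}^*(G)$ if and only if, for all $x,y\in G\setminus\{1\}$, $x\mathtt{T}y$ implies $x\mathtt{N}y$.
   Context: The power graph $\mathcal{P}(G)$ has vertex set $G$, distinct $x,y$ adjacent iff one is a positive integer power of the other; $\mathcal{P}^*(G)$ is its subgraph induced on $G\setminus\{1\}$. $x\mathtt{N}y$ (closed twins) iff $x,y$ have the same closed neighbourhood; $x\mathtt{O}y$ (open twins) iff they have the same open neighbourhood; $x\mathtt{T}y$ (twins) iff $x\mathtt{N}y$ or $x\mathtt{O}y$ (an equivalence relation). For a graph $\Gamma$ and equivalence $\sim$ on its vertices, $\Gamma/\sim$ has vertex set the classes, classes joined iff some representatives are joined; the quotient is tame if $[x]=[y]$ implies $x$ and $y$ are joined by a path in $\Gamma$. *)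

theory Defs
  imports "HOL-Algebra.Group"
begin

definition open_nbhd :: "'a set \<Rightarrow> ('a \<Rightarrow> 'a \<Rightarrow> bool) \<Rightarrow> 'a \<Rightarrow> 'a set" where
  "open_nbhd V E x = {y \<in> V. E x y}"

definition closed_nbhd :: "'a set \<Rightarrow> ('a \<Rightarrow> 'a \<Rightarrow> bool) \<Rightarrow> 'a \<Rightarrow> 'a set" where
  "closed_nbhd V E x = insert x (open_nbhd V E x)"

definition closed_twins :: "'a set \<Rightarrow> ('a \<Rightarrow> 'a \<Rightarrow> bool) \<Rightarrow> 'a \<Rightarrow> 'a \<Rightarrow> bool" where
  "closed_twins V E x y \<longleftrightarrow> closed_nbhd V E x = closed_nbhd V E y"

definition open_twins :: "'a set \<Rightarrow> ('a \<Rightarrow> 'a \<Rightarrow> bool) \<Rightarrow> 'a \<Rightarrow> 'a \<Rightarrow> bool" where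
  "open_twins V E x y \<longleftrightarrow> open_nbhd V E x = open_nbhd V E y"

definition twins :: "'a set \<Rightarrow> ('a \<Rightarrow> 'a \<Rightarrow> bool) \<Rightarrow> 'a \<Rightarrow> 'a \<Rightarrow> bool" where
  "twins V E x y \<longleftrightarrow> closed_twins V E x y \<or> open_twins V E x y"

definition connected_by_path :: "'a set \<Rightarrow> ('a \<Rightarrow> 'a \<Rightarrow> bool) \<Rightarrow> 'a \<Rightarrow> 'a \<Rightarrow> bool" where
  "connected_by_path V E x y \<longleftrightarrow> (x, y) \<in> {(u, v). u \<in> V \<and> v \<in> V \<and> E u v}\<^sup>*"

text \<open>The quotient Gamma/R (R an equivalence on V) is tame iff
  [x] = [y] implies x and y are joined by a path in Gamma.\<close>
definition tame_quotient :: "'a set \<Rightarrow> ('a \<Rightarrow> 'a \<Rightarrow> bool) \<Rightarrow> ('a \<Rightarrow> 'a \<Rightarrow> bool) \<Rightarrow> bool" where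
  "tame_quotient V E R \<longleftrightarrow> (\<forall>x\<in>V. \<forall>y\<in>V. R x y \<longrightarrow> connected_by_path V E x y)"

definition power_adj :: "('a, 'b) monoid_scheme \<Rightarrow> 'a \<Rightarrow> 'a \<Rightarrow> bool" where
  "power_adj G x y \<longleftrightarrow> x \<noteq> y \<and>
     ((\<exists>n::nat. n \<ge> 1 \<and> y = x [^]\<^bsub>G\<^esub> n) \<or> (\<exists>n::nat. n \<ge> 1 \<and> x = y [^]\<^bsub>G\<^esub> n))"

definition pstar_vertices :: "('a, 'b) monoid_scheme \<Rightarrow> 'a set" where
  "pstar_vertices G = carrier G - {\<one>\<^bsub>G\<^esub>}"

end

theory Submission
  imports Defs "HOL-Algebra.Multiplicative_Group"
begin

text \<open>Distinct closed twins are adjacent, so the condition makes the quotient tame. Conversely,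
  let \<open>x \<noteq> y\<close> be open twins joined by a path in \<open>\<P>\<^sup>*(G)\<close>: they are non-adjacent
  and have a common neighbour \<open>z\<close>. Since \<open>\<langle>x\<rangle> = \<langle>x\<^sup>-\<^sup>1\<rangle>\<close>, an \<open>x\<close> with
  \<open>x \<noteq> x\<^sup>-\<^sup>1\<close> is adjacent to \<open>x\<^sup>-\<^sup>1\<close>, hence so is \<open>y\<close>, and then \<open>y\<close> is adjacent
  to \<open>x\<close>; so \<open>x\<close> and \<open>y\<close> are involutions. The neighbour \<open>z\<close> of an involution
  \<open>x\<close> cannot be a power of \<open>x\<close>, so \<open>x, y \<in> \<langle>z\<rangle>\<close>; but a cyclic group contains at
  most one involution, namely \<open>z\<^bsup>ord z / 2\<^esup>\<close>.\<close>

lemma closed_twins_adjacent: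
  assumes "closed_twins V E x y" and "x \<noteq> y"
  shows "E x y"
  using assms by (auto simp: closed_twins_def closed_nbhd_def open_nbhd_def)

lemma closed_twins_connected_by_path:
  assumes "closed_twins V E x y" and "x \<in> V" and "y \<in> V"
  shows "connected_by_path V E x y"
  using assms closed_twins_adjacent[OF assms(1)]
  by (cases "x = y") (auto simp: connected_by_path_def)

lemma open_twins_sym: "open_twins V E x y \<Longrightarrow> open_twins V E y x"
  unfolding open_twins_def by (rule sym)

lemma open_twins_not_adjacent:
  assumes "open_twins V E x y" and "y \<in> V" and "\<not> E y y"
  shows "\<not> E x y"
  using assms by (auto simp: open_twins_def open_nbhd_def)

lemma open_twins_common_neighbour:
  assumes "open_twins V E x y" and "connected_by_path V E x y" and "x \<noteq> y"
  obtains z where "z \<in> V" and "E x z" and "E y z"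
proof -
  from assms(2,3) obtain z where "z \<in> V" and "E x z"
    unfolding connected_by_path_def by (auto elim: converse_rtranclE)
  with assms(1) show thesis
    using that by (auto simp: open_twins_def open_nbhd_def)
qed

lemma power_adj_sym: "power_adj G x y \<Longrightarrow> power_adj G y x"
  unfolding power_adj_def by auto

lemma double_mod_eq_of_dvd_double:
  fixes q a :: nat
  assumes "q dvd 2 * a" and "\<not> q dvd a"
  shows "2 * (a mod q) = q"
proof -
  have "q dvd 2 * (a mod q)"
    using assms(1) by (simp add: dvd_eq_mod_eq_0 mod_mult_right_eq)
  then obtain k where k: "2 * (a mod q) = q * k" ..
  have "q \<noteq> 0"
  proof
    assume "q = 0"
    with assms show False
      by simp
  qed
  have "a mod q \<noteq> 0"
    using assms(2) mod_0_imp_dvd by blast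
  then have "0 < a mod q" and "a mod q < q"
    using \<open>q \<noteq> 0\<close> by simp_all
  then have "q * k < q * 2" and "0 < q * k"
    using k by linarith+
  then have "0 < k" and "k < 2"
    by (simp_all add: mult_less_cancel1)
  then have "k = 1"
    by simp
  with k show ?thesis
    by simp
qed

context group
begin

lemma ex_pos_pow_iff_ex_pow:
  assumes "finite (carrier G)" and "x \<in> carrier G"
  shows "(\<exists>n::nat. n \<ge> 1 \<and> y = x [^] n) \<longleftrightarrow> (\<exists>n::nat. y = x [^] n)"
proof
  assume "\<exists>n::nat. y = x [^] n"
  then obtain n :: nat where "y = x [^] n" ..
  moreover have "x [^] (n + ord x) = x [^] n"
    using assms(2) by (simp add: nat_pow_mult[symmetric])
  moreover have "n + ord x \<ge> 1"
    using ord_ge_1[OF assms] by simp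
  ultimately show "\<exists>n::nat. n \<ge> 1 \<and> y = x [^] n"
    by metis
qed blast

lemma power_adj_iff:
  assumes "finite (carrier G)" and "x \<in> carrier G" and "y \<in> carrier G"
  shows "power_adj G x y \<longleftrightarrow>
    x \<noteq> y \<and> ((\<exists>n::nat. y = x [^] n) \<or> (\<exists>n::nat. x = y [^] n))"
  unfolding power_adj_def
  by (simp only: ex_pos_pow_iff_ex_pow[OF assms(1,2)] ex_pos_pow_iff_ex_pow[OF assms(1,3)])

lemma inv_eq_pow_ord_minus_1:
  assumes "finite (carrier G)" and "x \<in> carrier G"
  shows "inv x = x [^] (ord x - 1)"
proof (rule inv_equality)
  show "x [^] (ord x - 1) \<otimes> x = \<one>"
    using assms ord_ge_1[OF assms] by (simp flip: nat_pow_Suc)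
qed (use assms in auto)

lemma pow_of_inv_is_pow:
  assumes "finite (carrier G)" and "x \<in> carrier G"
  shows "\<exists>m::nat. inv x [^] (n::nat) = x [^] m"
  using assms by (auto simp: inv_eq_pow_ord_minus_1 nat_pow_pow)

lemma power_adj_inv_imp_power_adj:
  assumes "finite (carrier G)" and "x \<in> carrier G" and "y \<in> carrier G"
    and "power_adj G y (inv x)" and "y \<noteq> x"
  shows "power_adj G y x"
proof -
  have "(\<exists>n::nat. inv x = y [^] n) \<or> (\<exists>n::nat. y = inv x [^] n)"
    using assms(4) power_adj_iff[OF assms(1,3) inv_closed[OF assms(2)]] by blast
  moreover have "\<exists>m::nat. x = y [^] m" if "inv x = y [^] n" for n :: nat
  proof -
    have "x = inv y [^] n"
      using that assms(2,3) by (metis inv_inv nat_pow_inv)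
    then show ?thesis
      using pow_of_inv_is_pow[OF assms(1,3)] by metis
  qed
  moreover have "\<exists>m::nat. y = x [^] m" if "y = inv x [^] n" for n :: nat
    using that pow_of_inv_is_pow[OF assms(1,2)] by metis
  ultimately show ?thesis
    using assms(5) power_adj_iff[OF assms(1,3,2)] by blast
qed

lemma pow_of_self_inverse:
  assumes "x \<in> carrier G" and "inv x = x"
  shows "x [^] (n::nat) = \<one> \<or> x [^] n = x"
proof (induction n)
  case (Suc n)
  have "x \<otimes> x = \<one>"
    using assms by (metis r_inv)
  with Suc show ?case
    using assms by auto
qed simp

lemma self_inverse_eq_pow_half_ord:
  assumes "z \<in> carrier G" and "z [^] (a::nat) \<noteq> \<one>" and "inv (z [^] a) = z [^] a"
  shows "z [^] a = z [^] (ord z div 2)"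
proof -
  have "z [^] (2 * a) = \<one>"
    using assms by (metis mult_2 nat_pow_closed nat_pow_mult r_inv)
  then have "2 * (a mod ord z) = ord z"
    using assms by (simp add: pow_eq_id double_mod_eq_of_dvd_double)
  then have "a mod ord z = ord z div 2"
    by simp
  moreover have "z [^] a = z [^] (a mod ord z)"
  proof -
    have "z [^] a = z [^] (ord z * (a div ord z) + a mod ord z)"
      by simp
    also have "\<dots> = (z [^] ord z) [^] (a div ord z) \<otimes> z [^] (a mod ord z)"
      using assms(1) by (simp only: nat_pow_pow nat_pow_mult)
    finally show ?thesis
      using assms(1) by simp
  qed
  ultimately show ?thesis
    by simp
qed

lemma self_inverse_neighbour_eq_pow_half_ord:
  assumes "x \<in> carrier G" and "x \<noteq> \<one>" and "inv x = x"
    and "z \<in> carrier G" and "z \<noteq> \<one>" and "power_adj G x z"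
  shows "x = z [^] (ord z div 2)"
proof -
  have "z \<noteq> x [^] n" for n :: nat
    using pow_of_self_inverse[OF assms(1,3), of n] assms(5,6) by (auto simp: power_adj_def)
  with assms(6) obtain a :: nat where "x = z [^] a"
    by (auto simp: power_adj_def)
  then show ?thesis
    using self_inverse_eq_pow_half_ord assms(2-4) by blast
qed

lemma self_inverse_common_neighbour_eq:
  assumes "x \<in> pstar_vertices G" and "inv x = x" and "y \<in> pstar_vertices G" and "inv y = y"
    and "z \<in> pstar_vertices G" and "power_adj G x z" and "power_adj G y z"
  shows "x = y"
proof -
  have "x = z [^] (ord z div 2)"
    using assms(1,2,5,6)
    by (intro self_inverse_neighbour_eq_pow_half_ord) (auto simp: pstar_vertices_def)
  moreover have "y = z [^] (ord z div 2)"
    using assms(3,4,5,7)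
    by (intro self_inverse_neighbour_eq_pow_half_ord) (auto simp: pstar_vertices_def)
  ultimately show ?thesis
    by simp
qed

lemma open_twins_power_graph_self_inverse:
  assumes "finite (carrier G)" and "x \<in> pstar_vertices G" and "y \<in> pstar_vertices G"
    and "x \<noteq> y" and "open_twins (pstar_vertices G) (power_adj G) x y"
  shows "inv x = x"
proof (rule ccontr)
  assume "inv x \<noteq> x"
  have x: "x \<in> carrier G" "x \<noteq> \<one>" and y: "y \<in> carrier G"
    using assms(2,3) by (auto simp: pstar_vertices_def)
  then have "inv x \<in> pstar_vertices G"
    by (auto simp: pstar_vertices_def)
  moreover have "power_adj G x (inv x)"
  proof -
    have "inv x = x [^] (ord x - 1)"
      using assms(1) x(1) by (rule inv_eq_pow_ord_minus_1)
    then show ?thesis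
      using \<open>inv x \<noteq> x\<close> power_adj_iff[OF assms(1) x(1) inv_closed[OF x(1)]] by metis
  qed
  ultimately have "power_adj G y (inv x)"
    using assms(5) by (auto simp: open_twins_def open_nbhd_def)
  then have "power_adj G y x"
    using power_adj_inv_imp_power_adj[OF assms(1) x(1) y] not_sym[OF assms(4)] by blast
  moreover have "\<not> power_adj G x y"
    using open_twins_not_adjacent[OF assms(5,3)] by (simp add: power_adj_def)
  ultimately show False
    by (auto dest: power_adj_sym)
qed

lemma power_graph_connected_open_twins_eq:
  assumes "finite (carrier G)" and "x \<in> pstar_vertices G" and "y \<in> pstar_vertices G"
    and "open_twins (pstar_vertices G) (power_adj G) x y"
    and "connected_by_path (pstar_vertices G) (power_adj G) x y"
  shows "x = y"
proof (rule ccontr)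
  assume "x \<noteq> y"
  with assms(4,5) obtain z where z: "z \<in> pstar_vertices G" "power_adj G x z" "power_adj G y z"
    by (rule open_twins_common_neighbour)
  have "inv x = x"
    using open_twins_power_graph_self_inverse[OF assms(1-3) \<open>x \<noteq> y\<close> assms(4)] .
  moreover have "inv y = y"
    using open_twins_power_graph_self_inverse[OF assms(1,3,2) not_sym[OF \<open>x \<noteq> y\<close>]
        open_twins_sym[OF assms(4)]] .
  ultimately have "x = y"
    using self_inverse_common_neighbour_eq[OF assms(2) _ assms(3) _ z] by blast
  with \<open>x \<noteq> y\<close> show False ..
qed

end

theorem mainTheorem20:
  fixes G :: "('a, 'b) monoid_scheme"
  assumes "group G" and "finite (carrier G)"
  shows "tame_quotient (pstar_vertices G) (power_adj G) (twins (pstar_vertices G) (power_adj G))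
     \<longleftrightarrow> (\<forall>x\<in>pstar_vertices G. \<forall>y\<in>pstar_vertices G.
            twins (pstar_vertices G) (power_adj G) x y \<longrightarrow> closed_twins (pstar_vertices G) (power_adj G) x y)"
proof
  let ?V = "pstar_vertices G" and ?E = "power_adj G"
  assume tame: "tame_quotient ?V ?E (twins ?V ?E)"
  show "\<forall>x\<in>?V. \<forall>y\<in>?V. twins ?V ?E x y \<longrightarrow> closed_twins ?V ?E x y"
  proof (intro ballI impI)
    fix x y assume "x \<in> ?V" and "y \<in> ?V" and "twins ?V ?E x y"
    moreover from this have "connected_by_path ?V ?E x y"
      using tame by (simp add: tame_quotient_def)
    ultimately show "closed_twins ?V ?E x y"
      using group.power_graph_connected_open_twins_eq[OF assms, of x y]
      by (auto simp: twins_def closed_twins_def)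
  qed
qed (auto intro: closed_twins_connected_by_path simp: tame_quotient_def)

end
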